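(* Let $t \geq 1$ and $k \geq 1$ be integers, and let $\mathcal{F}$ be a finite family of finite sets with $\alpha(\mathcal{F}) \geq t$. Let $\mathcal{A}_1, \dots, \mathcal{A}_k$ be cross-$t$-intersecting sub-families of $\mathcal{F}$. If $k \geq \kappa(\mathcal{F},t)$, then \[\sum_{i=1}^k |\mathcal{A}_i| \leq k\, l(\mathcal{F},t) \quad \text{and} \quad \prod_{i=1}^k |\mathcal{A}_i| \leq \left(l(\mathcal{F},t)\right)^k,\] and both bounds are attained if $\mathcal{A}_1 = \dots = \mathcal{A}_k = \mathcal{L}$ for some largest $t$-intersecting sub-family $\mathcal{L}$ of $\mathcal{F}$. Moreover, if $k > \kappa(\mathcal{F},t)$, then in both inequalities equality holds only if $\mathcal{A}_1 = \dots = \mathcal{A}_k = \mathcal{L}$ for some largest $t$-intersecting sub-family $\mathcal{L}$ of $\mathcal{F}$.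
   Context: All sets and families are finite. A set $A$ $t$-intersects a set $B$ if $|A \cap B| \geq t$. A family $\mathcal{A}$ is $t$-intersecting if $|A \cap B| \geq t$ for all $A, B \in \mathcal{A}$ with $A \neq B$. Families $\mathcal{A}_1, \dots, \mathcal{A}_k$ (not necessarily distinct or non-empty) are cross-$t$-intersecting if for all $i \neq j$ in $\{1,\dots,k\}$, $|A \cap B| \geq t$ for every $A \in \mathcal{A}_i$ and $B \in \mathcal{A}_j$. For a non-empty family $\mathcal{F}$: $\alpha(\mathcal{F}) = \max\{|F| : F \in \mathcal{F}\}$; $l(\mathcal{F},t)$ is the size of a largest $t$-intersecting sub-family of $\mathcal{F}$. For a family $\mathcal{A}$, $\mathcal{A}^{t,+} = \{A \in \mathcal{A} : |A \cap B| \geq t \text{ for all } B \in \mathcal{A} \text{ with } B \neq A\}$ and $\mathcal{A}^{t,-} = \mathcal{A} \setminus \mathcal{A}^{t,+}$. For $\mathcal{A} \subseteq \mathcal{F}$, $\beta(\mathcal{F},t,\mathcal{A}) = \frac{l(\mathcal{F},t) - |\mathcal{A}^{t,+}|}{|\mathcal{A}^{t,-}|}$ if $\mathcal{A}^{t,-} \neq \emptyset$, and $\beta(\mathcal{F},t,\mathcal{A}) = \frac{l(\mathcal{F},t)}{|\mathcal{F}|}$ if $\mathcal{A}^{t,-} = \emptyset$. Then $\beta(\mathcal{F},t) = \min\{\beta(\mathcal{F},t,\mathcal{A}) : \mathcal{A} \subseteq \mathcal{F}\}$ (which is positive) and $\kappa(\mathcal{F},t) = 1/\beta(\mathcal{F},t)$.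 *)

theory Defs
  imports Main "HOL.Real"
begin

definition t_intersecting :: "nat \<Rightarrow> 'a set set \<Rightarrow> bool" where
  "t_intersecting t \<A> \<longleftrightarrow> (\<forall>A\<in>\<A>. \<forall>B\<in>\<A>. A \<noteq> B \<longrightarrow> card (A \<inter> B) \<ge> t)"

definition cross_t_intersecting :: "nat \<Rightarrow> nat \<Rightarrow> (nat \<Rightarrow> 'a set set) \<Rightarrow> bool" where
  "cross_t_intersecting t k \<A> \<longleftrightarrow>
     (\<forall>i\<in>{1..k}. \<forall>j\<in>{1..k}. i \<noteq> j \<longrightarrow>
        (\<forall>A\<in>\<A> i. \<forall>B\<in>\<A> j. card (A \<inter> B) \<ge> t))"

definition alpha :: "'a set set \<Rightarrow> nat" where
  "alpha \<F> = Max (card ` \<F>)"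

definition lmax :: "'a set set \<Rightarrow> nat \<Rightarrow> nat" where
  "lmax \<F> t = Max {card \<G> | \<G>. \<G> \<subseteq> \<F> \<and> t_intersecting t \<G>}"

definition largest_t_intersecting :: "'a set set \<Rightarrow> nat \<Rightarrow> 'a set set \<Rightarrow> bool" where
  "largest_t_intersecting \<F> t \<L> \<longleftrightarrow>
     \<L> \<subseteq> \<F> \<and> t_intersecting t \<L> \<and> card \<L> = lmax \<F> t"

definition tplus :: "nat \<Rightarrow> 'a set set \<Rightarrow> 'a set set" where
  "tplus t \<A> = {A \<in> \<A>. \<forall>B\<in>\<A>. B \<noteq> A \<longrightarrow> card (A \<inter> B) \<ge> t}"

definition tminus :: "nat \<Rightarrow> 'a set set \<Rightarrow> 'a set set" where
  "tminus t \<A> = \<A> - tplus t \<A>"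

definition betaA :: "'a set set \<Rightarrow> nat \<Rightarrow> 'a set set \<Rightarrow> real" where
  "betaA \<F> t \<A> =
     (if tminus t \<A> \<noteq> {}
      then (real (lmax \<F> t) - real (card (tplus t \<A>))) / real (card (tminus t \<A>))
      else real (lmax \<F> t) / real (card \<F>))"

definition beta :: "'a set set \<Rightarrow> nat \<Rightarrow> real" where
  "beta \<F> t = Min ((\<lambda>\<A>. betaA \<F> t \<A>) ` Pow \<F>)"

definition kappa :: "'a set set \<Rightarrow> nat \<Rightarrow> real" where
  "kappa \<F> t = 1 / beta \<F> t"

end

theory Submission
  imports Defs "HOL-Analysis.Convex"
begin

text \<open>Let \<open>\<U>\<close> be the union of the families, \<open>\<U>\<^sup>+ = tplus t \<U>\<close>, \<open>\<U>\<^sup>- = tminus t \<U>\<close> and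
  \<open>l = lmax \<F> t\<close>. Counting each \<open>X \<in> \<U>\<close> once per family containing it, a member of \<open>\<U>\<^sup>-\<close> has a
  partner in \<open>\<U>\<close> meeting it in fewer than \<open>t\<close> elements, so cross-intersection lets it lie in at
  most one family; hence \<open>\<Sum> |\<A> i| \<le> k |\<U>\<^sup>+| + |\<U>\<^sup>-|\<close>. The minimality of \<open>\<beta>\<close> gives
  \<open>|\<U>\<^sup>-| \<le> \<kappa> (l - |\<U>\<^sup>+|)\<close>, and \<open>|\<U>\<^sup>+| < l\<close> when \<open>\<U>\<^sup>- \<noteq> {}\<close> (add one member of \<open>\<U>\<^sup>-\<close> to \<open>\<U>\<^sup>+\<close>),
  so the sum is at most \<open>k l\<close>, strictly if \<open>k > \<kappa>\<close> and \<open>\<U>\<^sup>- \<noteq> {}\<close>. The product bound follows by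
  AM-GM. In the equality case \<open>\<U> = \<U>\<^sup>+\<close> is \<open>t\<close>-intersecting, so \<open>|\<U>| \<le> l\<close>, and \<open>\<Sum> |\<A> i| = k l\<close>
  forces every family to be all of \<open>\<U>\<close>.\<close>

lemma prod_le_mean_power:
  fixes x :: "'b \<Rightarrow> real"
  assumes "finite I" "I \<noteq> {}" and nonneg: "\<And>i. i \<in> I \<Longrightarrow> x i \<ge> 0"
  shows "(\<Prod>i\<in>I. x i) \<le> ((\<Sum>i\<in>I. x i) / card I) ^ card I"
proof -
  let ?P = "\<Prod>i\<in>I. x i" and ?m = "(\<Sum>i\<in>I. x i) / card I"
  have n: "card I > 0" using assms(1,2) by (simp add: card_gt_0_iff)
  have "?P \<ge> 0" by (rule prod_nonneg) (use nonneg in auto)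
  have "?m \<ge> 0" using nonneg by (simp add: sum_nonneg)
  show ?thesis
  proof (cases "?P = 0")
    case True
    then show ?thesis using \<open>?m \<ge> 0\<close> by simp
  next
    case False
    have "?P powr (1 / card I) \<le> ?m"
      using arith_geom_mean[OF assms] by (simp add: sum_divide_distrib)
    moreover have "?P = (?P powr (1 / card I)) ^ card I"
      using False \<open>?P \<ge> 0\<close> n by (simp add: powr_realpow [symmetric] powr_powr)
    ultimately show ?thesis by (metis power_mono powr_ge_zero)
  qed
qed

lemma prod_le_power_if_sum_le:
  fixes a :: "'b \<Rightarrow> nat"
  assumes "finite I" "I \<noteq> {}" "sum a I \<le> card I * l"
  shows "prod a I \<le> l ^ card I"
proof -
  have n: "card I > 0" using assms(1,2) by (simp add: card_gt_0_iff)
  have "real (sum a I) \<le> real (card I) * real l"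
    using assms(3) by (metis of_nat_le_iff of_nat_mult)
  then have "real (sum a I) / card I \<le> l"
    using n by (simp add: divide_le_eq mult.commute del: of_nat_sum)
  then have "(real (sum a I) / card I) ^ card I \<le> real l ^ card I"
    by (intro power_mono) (simp_all add: sum_nonneg)
  then have "real (prod a I) \<le> real l ^ card I"
    using prod_le_mean_power[OF assms(1,2), of "\<lambda>i. real (a i)"] by simp
  then show ?thesis by (simp flip: of_nat_power del: of_nat_prod)
qed

lemma prod_less_power_if_sum_less:
  fixes a :: "'b \<Rightarrow> nat"
  assumes "finite I" "I \<noteq> {}" "sum a I < card I * l"
  shows "prod a I < l ^ card I"
proof -
  have n: "card I > 0" using assms(1,2) by (simp add: card_gt_0_iff)
  have "real (sum a I) < real (card I) * real l"
    using assms(3) by (metis of_nat_less_iff of_nat_mult)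
  then have "real (sum a I) / card I < l"
    using n by (simp add: divide_less_eq mult.commute del: of_nat_sum)
  then have "(real (sum a I) / card I) ^ card I < real l ^ card I"
    using n by (intro power_strict_mono) (auto simp: sum_nonneg)
  then have "real (prod a I) < real l ^ card I"
    using prod_le_mean_power[OF assms(1,2), of "\<lambda>i. real (a i)"] by simp
  then show ?thesis by (simp flip: of_nat_power del: of_nat_prod)
qed

lemma tplus_subset: "tplus t \<A> \<subseteq> \<A>"
  by (auto simp: tplus_def)

lemma t_intersecting_tplus: "t_intersecting t (tplus t \<A>)"
  unfolding t_intersecting_def tplus_def by auto

lemma t_intersecting_insert_tplus:
  assumes "X \<in> \<A>" shows "t_intersecting t (insert X (tplus t \<A>))"
  using assms unfolding t_intersecting_def tplus_def by (auto simp: Int_commute)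

lemma tplus_Un_tminus: "tplus t \<A> \<union> tminus t \<A> = \<A>"
  by (auto simp: tminus_def tplus_def)

lemma tplus_Int_tminus: "tplus t \<A> \<inter> tminus t \<A> = {}"
  by (auto simp: tminus_def)

context
  fixes \<F> :: "'a set set" and t :: nat
  assumes finite_\<F>: "finite \<F>"
begin

lemma card_le_lmax:
  assumes "\<G> \<subseteq> \<F>" "t_intersecting t \<G>"
  shows "card \<G> \<le> lmax \<F> t"
proof -
  have "{card \<G> | \<G>. \<G> \<subseteq> \<F> \<and> t_intersecting t \<G>} \<subseteq> card ` Pow \<F>" by auto
  then have "finite {card \<G> | \<G>. \<G> \<subseteq> \<F> \<and> t_intersecting t \<G>}"
    using finite_\<F> by (simp add: finite_subset)
  then show ?thesis unfolding lmax_def using assms by (intro Max_ge) blast+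
qed

lemma ex_largest_t_intersecting: "\<exists>\<L>. largest_t_intersecting \<F> t \<L>"
proof -
  have "{card \<G> | \<G>. \<G> \<subseteq> \<F> \<and> t_intersecting t \<G>} \<subseteq> card ` Pow \<F>" by auto
  then have "finite {card \<G> | \<G>. \<G> \<subseteq> \<F> \<and> t_intersecting t \<G>}"
    using finite_\<F> by (simp add: finite_subset)
  moreover have "t_intersecting t {}" by (simp add: t_intersecting_def)
  ultimately have "lmax \<F> t \<in> {card \<G> | \<G>. \<G> \<subseteq> \<F> \<and> t_intersecting t \<G>}"
    unfolding lmax_def by (intro Max_in) blast+
  then show ?thesis unfolding largest_t_intersecting_def by auto
qed

lemma lmax_pos: "\<F> \<noteq> {} \<Longrightarrow> lmax \<F> t > 0"
  using card_le_lmax[of "{F}" for F] by (force simp: t_intersecting_def)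

lemma card_tplus_le_lmax: "\<A> \<subseteq> \<F> \<Longrightarrow> card (tplus t \<A>) \<le> lmax \<F> t"
  using tplus_subset t_intersecting_tplus by (blast intro: card_le_lmax)

lemma card_tplus_less_lmax:
  assumes "\<A> \<subseteq> \<F>" "tminus t \<A> \<noteq> {}"
  shows "card (tplus t \<A>) < lmax \<F> t"
proof -
  obtain X where X: "X \<in> \<A>" "X \<notin> tplus t \<A>"
    using assms(2) by (auto simp: tminus_def)
  have "finite (tplus t \<A>)"
    using assms(1) finite_\<F> tplus_subset by (metis finite_subset)
  then have "card (tplus t \<A>) < card (insert X (tplus t \<A>))"
    using X(2) by simp
  also have "\<dots> \<le> lmax \<F> t"
    using X(1) assms(1) tplus_subset t_intersecting_insert_tplus by (blast intro: card_le_lmax)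
  finally show ?thesis .
qed

lemma beta_le_betaA: "\<A> \<subseteq> \<F> \<Longrightarrow> beta \<F> t \<le> betaA \<F> t \<A>"
  unfolding beta_def using finite_\<F> by (intro Min_le) auto

lemma beta_pos:
  assumes "\<F> \<noteq> {}" shows "beta \<F> t > 0"
proof -
  have "betaA \<F> t \<A> > 0" if "\<A> \<subseteq> \<F>" for \<A>
  proof (cases "tminus t \<A> = {}")
    case True
    then show ?thesis
      using lmax_pos[OF assms] finite_\<F> assms by (simp add: betaA_def card_gt_0_iff)
  next
    case False
    have "finite (tminus t \<A>)"
      using that finite_\<F> by (auto simp: tminus_def intro: finite_subset)
    then show ?thesis
      using False card_tplus_less_lmax[OF that False] by (simp add: betaA_def card_gt_0_iff)
  qed
  moreover have "beta \<F> t \<in> betaA \<F> t ` Pow \<F>"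
    unfolding beta_def using finite_\<F> by (intro Min_in) auto
  ultimately show ?thesis by auto
qed

lemma kappa_pos: "\<F> \<noteq> {} \<Longrightarrow> kappa \<F> t > 0"
  using beta_pos by (simp add: kappa_def)

lemma card_tminus_le_kappa:
  assumes "\<F> \<noteq> {}" "\<A> \<subseteq> \<F>" "tminus t \<A> \<noteq> {}"
  shows "real (card (tminus t \<A>)) \<le> kappa \<F> t * (real (lmax \<F> t) - real (card (tplus t \<A>)))"
proof -
  have "finite (tminus t \<A>)"
    using assms(2) finite_\<F> by (auto simp: tminus_def intro: finite_subset)
  then have "card (tminus t \<A>) > 0" using assms(3) by (simp add: card_gt_0_iff)
  moreover have "beta \<F> t \<le> (real (lmax \<F> t) - real (card (tplus t \<A>))) / real (card (tminus t \<A>))"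
    using beta_le_betaA[OF assms(2)] assms(3) by (simp add: betaA_def)
  ultimately show ?thesis
    using beta_pos[OF assms(1)] by (simp add: kappa_def pos_le_divide_eq field_simps)
qed


lemma weighted_card_tplus_tminus_le:
  assumes "\<F> \<noteq> {}" "\<A> \<subseteq> \<F>" "kappa \<F> t \<le> real k"
  shows "k * card (tplus t \<A>) + card (tminus t \<A>) \<le> k * lmax \<F> t"
proof (cases "tminus t \<A> = {}")
  case True
  then show ?thesis using card_tplus_le_lmax[OF assms(2)] by simp
next
  case False
  have gap: "real (lmax \<F> t) - real (card (tplus t \<A>)) > 0"
    using card_tplus_less_lmax[OF assms(2) False] by simp
  have "real (card (tminus t \<A>)) \<le> kappa \<F> t * (real (lmax \<F> t) - real (card (tplus t \<A>)))"
    using card_tminus_le_kappa[OF assms(1,2) False] .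
  also have "\<dots> \<le> real k * (real (lmax \<F> t) - real (card (tplus t \<A>)))"
    using assms(3) gap by (intro mult_right_mono) auto
  finally have "real (k * card (tplus t \<A>) + card (tminus t \<A>)) \<le> real (k * lmax \<F> t)"
    by (simp add: algebra_simps)
  then show ?thesis by linarith
qed

lemma weighted_card_tplus_tminus_less:
  assumes "\<F> \<noteq> {}" "\<A> \<subseteq> \<F>" "kappa \<F> t < real k" "tminus t \<A> \<noteq> {}"
  shows "k * card (tplus t \<A>) + card (tminus t \<A>) < k * lmax \<F> t"
proof -
  have gap: "real (lmax \<F> t) - real (card (tplus t \<A>)) > 0"
    using card_tplus_less_lmax[OF assms(2,4)] by simp
  have "real (card (tminus t \<A>)) \<le> kappa \<F> t * (real (lmax \<F> t) - real (card (tplus t \<A>)))"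
    using card_tminus_le_kappa[OF assms(1,2,4)] .
  also have "\<dots> < real k * (real (lmax \<F> t) - real (card (tplus t \<A>)))"
    using assms(3) gap by (intro mult_strict_right_mono) auto
  finally have "real (k * card (tplus t \<A>) + card (tminus t \<A>)) < real (k * lmax \<F> t)"
    by (simp add: algebra_simps)
  then show ?thesis by linarith
qed

end

lemma card_families_containing_tminus_le_1:
  assumes "cross_t_intersecting t k \<A>" "X \<in> tminus t (\<Union>i\<in>{1..k}. \<A> i)"
  shows "card {i \<in> {1..k}. X \<in> \<A> i} \<le> 1"
proof -
  have "\<exists>G\<in>(\<Union>i\<in>{1..k}. \<A> i). G \<noteq> X \<and> card (X \<inter> G) < t"
    using assms(2) by (simp add: tminus_def tplus_def not_le) blast
  then obtain G j where G: "G \<noteq> X" "card (X \<inter> G) < t" "j \<in> {1..k}" "G \<in> \<A> j"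
    by blast
  \<comment> \<open>X lies in no family other than \<A> j, since it would then t-intersect G.\<close>
  have "{i \<in> {1..k}. X \<in> \<A> i} \<subseteq> {j}"
    using assms(1) G unfolding cross_t_intersecting_def by (auto simp: not_le[symmetric])
  then show ?thesis using card_mono[of "{j}"] by fastforce
qed

lemma sum_card_le_weighted_card_tplus_tminus:
  fixes \<A> :: "nat \<Rightarrow> 'a set set" and k t :: nat
  defines "\<U> \<equiv> \<Union>i\<in>{1..k}. \<A> i"
  assumes "cross_t_intersecting t k \<A>" "finite \<U>"
  shows "(\<Sum>i=1..k. card (\<A> i)) \<le> k * card (tplus t \<U>) + card (tminus t \<U>)"
proof -
  define c where "c X = card {i \<in> {1..k}. X \<in> \<A> i}" for X
  have c_le_k: "c X \<le> k" for X
  proof -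
    have "c X \<le> card {1..k}" unfolding c_def by (rule card_mono) auto
    then show ?thesis by simp
  qed
  have "{X \<in> \<U>. X \<in> \<A> i} = \<A> i" if "i \<in> {1..k}" for i
    using that by (auto simp: \<U>_def)
  then have "(\<Sum>i=1..k. card (\<A> i)) = (\<Sum>i=1..k. card {X \<in> \<U>. X \<in> \<A> i})"
    by simp
  also have "\<dots> = (\<Sum>X\<in>\<U>. c X)"
    using assms(3) by (intro sum_multicount_gen) (auto simp: c_def)
  also have "\<dots> = (\<Sum>X\<in>tplus t \<U>. c X) + (\<Sum>X\<in>tminus t \<U>. c X)"
    using assms(3) tplus_Un_tminus[of t \<U>] tplus_Int_tminus[of t \<U>]
    by (metis finite_Un sum.union_disjoint)
  also have "\<dots> \<le> (\<Sum>X\<in>tplus t \<U>. k) + (\<Sum>X\<in>tminus t \<U>. 1)"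
    using c_le_k card_families_containing_tminus_le_1[OF assms(2)]
    by (intro add_mono sum_mono) (auto simp: c_def \<U>_def)
  finally show ?thesis by (simp add: mult.commute)
qed

lemma subsets_eq_if_sum_card_ge:
  assumes "finite I" "finite \<U>" "\<forall>i\<in>I. A i \<subseteq> \<U>" "card I * card \<U> \<le> (\<Sum>i\<in>I. card (A i))"
  shows "\<forall>i\<in>I. A i = \<U>"
proof (rule ccontr)
  assume "\<not> (\<forall>i\<in>I. A i = \<U>)"
  then obtain j where j: "j \<in> I" "A j \<subset> \<U>" using assms(3) by blast
  have "(\<Sum>i\<in>I. card (A i)) < (\<Sum>i\<in>I. card \<U>)"
    using j assms(1-3) psubset_card_mono[OF assms(2) j(2)]
    by (intro sum_strict_mono_ex1) (auto intro: card_mono)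
  then show False using assms(4) by simp
qed

lemma card_ge_if_t_intersecting:
  assumes "t_intersecting t \<L>" "2 \<le> card \<L>" "A \<in> \<L>" "finite A"
  shows "t \<le> card A"
proof -
  have "\<not> \<L> \<subseteq> {A}"
    using assms(2) card_mono[of "{A}" \<L>] by auto
  then obtain C where "C \<in> \<L>" "C \<noteq> A" by blast
  then have "t \<le> card (A \<inter> C)"
    using assms(1,3) by (auto simp: t_intersecting_def)
  also have "\<dots> \<le> card A"
    using assms(4) by (intro card_mono) auto
  finally show ?thesis .
qed

lemma ex_largest_t_intersecting_cross:
  assumes "finite \<F>" "\<F> \<noteq> {}" "\<forall>F\<in>\<F>. finite F" "t \<le> alpha \<F>"
  shows "\<exists>\<L>. largest_t_intersecting \<F> t \<L> \<and> cross_t_intersecting t k (\<lambda>_. \<L>)"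
proof -
  obtain \<L> where \<L>: "largest_t_intersecting \<F> t \<L>"
    using ex_largest_t_intersecting[OF assms(1)] by blast
  show ?thesis
  proof (cases "2 \<le> card \<L>")
    case True
    have "t \<le> card (A \<inter> B)" if "A \<in> \<L>" "B \<in> \<L>" for A B
      using that \<L> True assms(3) card_ge_if_t_intersecting[of t \<L> A]
      by (cases "A = B") (auto simp: largest_t_intersecting_def t_intersecting_def)
    then show ?thesis
      using \<L> by (auto simp: cross_t_intersecting_def)
  next
    case False
    \<comment> \<open>Then l(F,t) = 1, and a single set of size alpha(F) is a largest family meeting itself in at least t elements.\<close>
    then have lmax_1: "lmax \<F> t = 1"
      using \<L> lmax_pos[OF assms(1,2), of t] by (auto simp: largest_t_intersecting_def)
    have "alpha \<F> \<in> card ` \<F>"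
      unfolding alpha_def using assms(1,2) by (intro Max_in) auto
    then obtain F where "F \<in> \<F>" "card F = alpha \<F>" by auto
    then have "largest_t_intersecting \<F> t {F} \<and> cross_t_intersecting t k (\<lambda>_. {F})"
      using assms(4) lmax_1 by (simp add: largest_t_intersecting_def t_intersecting_def cross_t_intersecting_def)
    then show ?thesis by blast
  qed
qed

lemma sum_card_cross_t_intersecting_le:
  assumes "finite \<F>" "\<F> \<noteq> {}" "\<forall>i\<in>{1..k}. \<A> i \<subseteq> \<F>"
    and "cross_t_intersecting t k \<A>" "kappa \<F> t \<le> real k"
  shows "(\<Sum>i=1..k. card (\<A> i)) \<le> k * lmax \<F> t"
proof -
  let ?\<U> = "\<Union>i\<in>{1..k}. \<A> i"
  have "?\<U> \<subseteq> \<F>" using assms(3) by blast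
  then have "finite ?\<U>" using assms(1) by (rule finite_subset)
  then have "(\<Sum>i=1..k. card (\<A> i)) \<le> k * card (tplus t ?\<U>) + card (tminus t ?\<U>)"
    using sum_card_le_weighted_card_tplus_tminus assms(4) by blast
  also have "\<dots> \<le> k * lmax \<F> t"
    using weighted_card_tplus_tminus_le[OF assms(1,2) \<open>?\<U> \<subseteq> \<F>\<close> assms(5)] .
  finally show ?thesis .
qed

lemma largest_if_sum_card_cross_t_intersecting_eq:
  assumes "finite \<F>" "\<F> \<noteq> {}" "\<forall>i\<in>{1..k}. \<A> i \<subseteq> \<F>"
    and "cross_t_intersecting t k \<A>" "kappa \<F> t < real k"
    and sum_eq: "(\<Sum>i=1..k. card (\<A> i)) = k * lmax \<F> t"
  shows "\<exists>\<L>. largest_t_intersecting \<F> t \<L> \<and> (\<forall>i\<in>{1..k}. \<A> i = \<L>)"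
proof -
  define \<U> where "\<U> = (\<Union>i\<in>{1..k}. \<A> i)"
  have \<U>: "\<U> \<subseteq> \<F>" using assms(3) by (auto simp: \<U>_def)
  then have "finite \<U>" using assms(1) by (rule finite_subset)
  then have sum_le: "(\<Sum>i=1..k. card (\<A> i)) \<le> k * card (tplus t \<U>) + card (tminus t \<U>)"
    using sum_card_le_weighted_card_tplus_tminus assms(4) unfolding \<U>_def by blast
  have "tminus t \<U> = {}"
    using weighted_card_tplus_tminus_less[OF assms(1,2) \<U> assms(5)] sum_le sum_eq by fastforce
  then have tplus_\<U>: "tplus t \<U> = \<U>"
    using tplus_Un_tminus[of t \<U>] by simp
  then have "t_intersecting t \<U>"
    using t_intersecting_tplus by metis
  then have "card \<U> \<le> lmax \<F> t"
    using card_le_lmax[OF assms(1) \<U>] by blast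
  moreover have "0 < real k"
    using assms(5) kappa_pos[OF assms(1,2), of t] by linarith
  ultimately have card_\<U>: "card \<U> = lmax \<F> t"
    using sum_le sum_eq tplus_\<U> \<open>tminus t \<U> = {}\<close> by simp
  have "\<forall>i\<in>{1..k}. \<A> i = \<U>"
    using sum_eq card_\<U> \<open>finite \<U>\<close>
    by (intro subsets_eq_if_sum_card_ge) (auto simp: \<U>_def)
  moreover have "largest_t_intersecting \<F> t \<U>"
    using \<U> \<open>t_intersecting t \<U>\<close> card_\<U> by (simp add: largest_t_intersecting_def)
  ultimately show ?thesis by blast
qed

theorem theorem1p1:
  fixes \<F> :: "'a set set" and t k :: nat and \<A> :: "nat \<Rightarrow> 'a set set"
  assumes "t \<ge> 1" and "k \<ge> 1"
    and "finite \<F>" and "\<F> \<noteq> {}" and "\<forall>F\<in>\<F>. finite F"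
    and "alpha \<F> \<ge> t"
    and "\<forall>i\<in>{1..k}. \<A> i \<subseteq> \<F>"
    and "cross_t_intersecting t k \<A>"
    and "real k \<ge> kappa \<F> t"
  shows "(\<Sum>i=1..k. card (\<A> i)) \<le> k * lmax \<F> t
       \<and> (\<Prod>i=1..k. card (\<A> i)) \<le> (lmax \<F> t) ^ k
       \<and> (\<forall>\<L>. largest_t_intersecting \<F> t \<L> \<longrightarrow>
              (\<Sum>i=1..k. card \<L>) = k * lmax \<F> t \<and> (\<Prod>i=1..k. card \<L>) = (lmax \<F> t) ^ k)
       \<and> (\<exists>\<L>. largest_t_intersecting \<F> t \<L> \<and> cross_t_intersecting t k (\<lambda>_. \<L>))
       \<and> (real k > kappa \<F> t \<longrightarrow>
            ((\<Sum>i=1..k. card (\<A> i)) = k * lmax \<F> t \<longrightarrow>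
               (\<exists>\<L>. largest_t_intersecting \<F> t \<L> \<and> (\<forall>i\<in>{1..k}. \<A> i = \<L>)))
          \<and> ((\<Prod>i=1..k. card (\<A> i)) = (lmax \<F> t) ^ k \<longrightarrow>
               (\<exists>\<L>. largest_t_intersecting \<F> t \<L> \<and> (\<forall>i\<in>{1..k}. \<A> i = \<L>))))"
proof -
  have sum_le: "(\<Sum>i=1..k. card (\<A> i)) \<le> k * lmax \<F> t"
    using sum_card_cross_t_intersecting_le[OF assms(3,4,7-9)] .
  have "{1..k} \<noteq> {}" using assms(2) by simp
  then have prod_le: "(\<Prod>i=1..k. card (\<A> i)) \<le> lmax \<F> t ^ k"
    using prod_le_power_if_sum_le[of "{1..k}" "\<lambda>i. card (\<A> i)" "lmax \<F> t"] sum_le by simp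
  have "(\<Sum>i=1..k. card (\<A> i)) = k * lmax \<F> t"
    if "(\<Prod>i=1..k. card (\<A> i)) = lmax \<F> t ^ k"
    using prod_less_power_if_sum_less[of "{1..k}" "\<lambda>i. card (\<A> i)" "lmax \<F> t"]
      \<open>{1..k} \<noteq> {}\<close> sum_le that by fastforce
  then show ?thesis
    using sum_le prod_le ex_largest_t_intersecting_cross[OF assms(3-6)]
      largest_if_sum_card_cross_t_intersecting_eq[OF assms(3,4,7,8)]
    by (auto simp: largest_t_intersecting_def)
qed

end
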